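(* Let $n=2k+1$ with $k\ge 1$. Then $\{a_i,c_i : i=1,2,\ldots,n\}$ is a strong resolving set of $U_n$.
   Context: For $n\ge 3$, $U_n$ is the graph with vertex set $\{a_i,b_i,c_i,d_i,e_i : 1\le i\le n\}$ and edge set $\{a_ia_{i+1}, b_ib_{i+1}, e_ie_{i+1}, a_ib_i, b_ic_i, c_id_i, d_ie_i, c_{i+1}d_i : 1\le i\le n\}$, indices taken modulo $n$. $d$ is the graph distance. A vertex $w$ strongly resolves distinct vertices $u,v$ if $d(v,w)=d(v,u)+d(u,w)$ or $d(u,w)=d(u,v)+d(v,w)$. A set $S$ is a strong resolving set if every two distinct vertices are strongly resolved by some vertex of $S$. *)

theory Defs
  imports Main
begin

(* Vertices of U_n: a_i, b_i, c_i, d_i, e_i with indices i in {0..<n}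
   (paper's index i in {1..n} corresponds to i-1; indices modulo n). *)
datatype uvert = A nat | B nat | C nat | D nat | E nat

definition U_verts :: "nat \<Rightarrow> uvert set" where
  "U_verts n = (\<Union>i\<in>{0..<n}. {A i, B i, C i, D i, E i})"

definition U_edges :: "nat \<Rightarrow> (uvert \<times> uvert) set" where
  "U_edges n = (\<Union>i\<in>{0..<n}.
     {(A i, A (Suc i mod n)), (B i, B (Suc i mod n)), (E i, E (Suc i mod n)),
      (A i, B i), (B i, C i), (C i, D i), (D i, E i), (C (Suc i mod n), D i)})"

definition U_adj :: "nat \<Rightarrow> uvert \<Rightarrow> uvert \<Rightarrow> bool" where
  "U_adj n u v \<longleftrightarrow> (u, v) \<in> U_edges n \<or> (v, u) \<in> U_edges n"

definition is_walk :: "('a \<Rightarrow> 'a \<Rightarrow> bool) \<Rightarrow> 'a list \<Rightarrow> 'a \<Rightarrow> 'a \<Rightarrow> bool" where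
  "is_walk adj p u v \<longleftrightarrow> p \<noteq> [] \<and> hd p = u \<and> last p = v \<and>
     (\<forall>j. Suc j < length p \<longrightarrow> adj (p ! j) (p ! Suc j))"

(* Graph distance: least number of edges of a walk from u to v (graph is connected). *)
definition gdist :: "('a \<Rightarrow> 'a \<Rightarrow> bool) \<Rightarrow> 'a \<Rightarrow> 'a \<Rightarrow> nat" where
  "gdist adj u v = (LEAST k. \<exists>p. is_walk adj p u v \<and> length p = Suc k)"

definition strongly_resolves :: "('a \<Rightarrow> 'a \<Rightarrow> bool) \<Rightarrow> 'a \<Rightarrow> 'a \<Rightarrow> 'a \<Rightarrow> bool" where
  "strongly_resolves adj w u v \<longleftrightarrow>
     gdist adj v w = gdist adj v u + gdist adj u w \<or>
     gdist adj u w = gdist adj u v + gdist adj v w"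

definition strong_resolving_set :: "'a set \<Rightarrow> ('a \<Rightarrow> 'a \<Rightarrow> bool) \<Rightarrow> 'a set \<Rightarrow> bool" where
  "strong_resolving_set V adj S \<longleftrightarrow> S \<subseteq> V \<and>
     (\<forall>u\<in>V. \<forall>v\<in>V. u \<noteq> v \<longrightarrow> (\<exists>w\<in>S. strongly_resolves adj w u v))"

end

theory Submission
  imports Defs
begin

text \<open>
  The distances of \<open>U\<^sub>n\<close> have a closed form in terms of the cyclic offset between the
  indices of the two vertices. A function that vanishes on the diagonal, changes by at
  most one along edges and can always be decreased by one along some edge is the graph
  distance, so the closed form is verified locally. Given the closed form, a pair of
  vertices containing a landmark \<open>a\<^sub>i\<close> or \<open>c\<^sub>i\<close> is resolved by that landmark; \<open>b\<^sub>i\<close> lies on a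
  geodesic from any \<open>b\<^sub>j\<close>, \<open>d\<^sub>j\<close>, \<open>e\<^sub>j\<close> to \<open>a\<^sub>i\<close>; and for two vertices among the \<open>d\<close>'s and \<open>e\<close>'s
  one of them, \<open>x\<^sub>i\<close> say, chosen to be a \<open>d\<close>-vertex unless both are \<open>e\<close>-vertices, lies on a
  geodesic from the other one, \<open>y\<^sub>j\<close>, to whichever of \<open>c\<^sub>i\<close>, \<open>c\<^sub>i\<^sub>+\<^sub>1\<close> faces \<open>j\<close>.
\<close>

lemma gdist_self: "gdist adj u u = 0"
  unfolding gdist_def by (rule Least_equality) (auto simp: is_walk_def intro: exI[of _ "[u]"])

lemma strongly_resolves_self: "strongly_resolves adj u u v"
  by (simp add: strongly_resolves_def gdist_self)

lemma strongly_resolves_commute: "strongly_resolves adj w u v \<longleftrightarrow> strongly_resolves adj w v u"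
  unfolding strongly_resolves_def by blast

lemma is_walk_Cons:
  assumes "is_walk adj p y z" "adj x y"
  shows "is_walk adj (x # p) x z"
proof -
  have p: "p \<noteq> []" "hd p = y" "last p = z"
    and steps: "\<And>j. Suc j < length p \<Longrightarrow> adj (p ! j) (p ! Suc j)"
    using assms(1) by (auto simp: is_walk_def)
  have "adj ((x # p) ! j) ((x # p) ! Suc j)" if "Suc j < length (x # p)" for j
    using p assms(2) steps[of "j - 1"] that by (cases j) (auto simp: hd_conv_nth)
  then show ?thesis using p by (simp add: is_walk_def)
qed

lemma is_walk_ConsD:
  assumes "is_walk adj (x # y # p) u v"
  shows "adj u y" "is_walk adj (y # p) y v"
proof -
  have steps: "\<And>j. Suc j < length (x # y # p) \<Longrightarrow> adj ((x # y # p) ! j) ((x # y # p) ! Suc j)"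
    and "x = u" "last (y # p) = v"
    using assms by (auto simp: is_walk_def)
  show "adj u y"
    using steps[of 0] \<open>x = u\<close> by simp
  show "is_walk adj (y # p) y v"
    using steps[of "Suc _"] \<open>last (y # p) = v\<close> by (auto simp: is_walk_def)
qed

lemma walk_length_ge_potential:
  assumes step: "\<And>x y. adj x y \<Longrightarrow> f x v \<le> f y v + (1::nat)"
    and target: "f v v = 0"
  shows "is_walk adj p u v \<Longrightarrow> f u v \<le> length p - 1"
proof (induction p arbitrary: u)
  case Nil
  then show ?case by (simp add: is_walk_def)
next
  case (Cons x p)
  show ?case
  proof (cases p)
    case Nil
    with Cons.prems have "u = v" by (auto simp: is_walk_def)
    with target show ?thesis by simp
  next
    case (Cons y q)
    have walk: "is_walk adj (x # y # q) u v"
      using Cons.prems \<open>p = y # q\<close> by simp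
    have "f u v \<le> f y v + 1"
      using step is_walk_ConsD(1)[OF walk] .
    moreover have "f y v \<le> length p - 1"
      using Cons.IH is_walk_ConsD(2)[OF walk] \<open>p = y # q\<close> by simp
    ultimately show ?thesis
      using \<open>p = y # q\<close> by simp
  qed
qed

lemma walk_along_descent:
  assumes descent: "\<And>x. x \<in> V \<Longrightarrow> x \<noteq> z \<Longrightarrow> \<exists>y. adj x y \<and> y \<in> V \<and> f y z + 1 = (f x z :: nat)"
    and target: "f z z = 0"
    and "x \<in> V"
  shows "\<exists>p. is_walk adj p x z \<and> length p = Suc (f x z)"
  using \<open>x \<in> V\<close>
proof (induction "f x z" arbitrary: x rule: less_induct)
  case less
  show ?case
  proof (cases "x = z")
    case True
    with target show ?thesis by (intro exI[of _ "[z]"]) (simp add: is_walk_def)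
  next
    case False
    then obtain y where y: "adj x y" "y \<in> V" "f y z + 1 = f x z"
      using descent less.prems by blast
    then obtain p where "is_walk adj p y z" "length p = Suc (f y z)"
      using less.hyps[of y] by auto
    with y show ?thesis by (intro exI[of _ "x # p"]) (simp add: is_walk_Cons)
  qed
qed

lemma gdist_eqI:
  assumes step: "\<And>x y z. adj x y \<Longrightarrow> z \<in> V \<Longrightarrow> f x z \<le> f y z + (1::nat)"
    and diag: "\<And>x. f x x = 0"
    and descent: "\<And>x z. x \<in> V \<Longrightarrow> z \<in> V \<Longrightarrow> x \<noteq> z \<Longrightarrow> \<exists>y. adj x y \<and> y \<in> V \<and> f y z + 1 = f x z"
    and "x \<in> V" "z \<in> V"
  shows "gdist adj x z = f x z"
  unfolding gdist_def
proof (rule Least_equality)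
  have "\<And>x. x \<in> V \<Longrightarrow> x \<noteq> z \<Longrightarrow> \<exists>y. adj x y \<and> y \<in> V \<and> f y z + 1 = f x z"
    using descent \<open>z \<in> V\<close> by blast
  then show "\<exists>p. is_walk adj p x z \<and> length p = Suc (f x z)"
    using walk_along_descent diag \<open>x \<in> V\<close> by metis
next
  fix m
  assume "\<exists>p. is_walk adj p x z \<and> length p = Suc m"
  then obtain p where "is_walk adj p x z" "length p = Suc m"
    by blast
  moreover have "\<And>x y. adj x y \<Longrightarrow> f x z \<le> f y z + 1"
    using step \<open>z \<in> V\<close> by blast
  ultimately show "f x z \<le> m"
    using walk_length_ge_potential[of adj f z p x] diag by simp
qed

definition ring_succ :: "nat \<Rightarrow> nat \<Rightarrow> nat" where
  "ring_succ n i = (if Suc i = n then 0 else Suc i)"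

definition ring_pred :: "nat \<Rightarrow> nat \<Rightarrow> nat" where
  "ring_pred n i = (if i = 0 then n - 1 else i - 1)"

definition ring_offset :: "nat \<Rightarrow> nat \<Rightarrow> nat \<Rightarrow> int" where
  "ring_offset n i j =
     (if 2 * (int j - int i) > int n then int j - int i - int n
      else if 2 * (int j - int i) < - int n then int j - int i + int n
      else int j - int i)"

lemma ring_offset_self [simp]: "ring_offset n i i = 0"
  by (simp add: ring_offset_def)

lemma ring_succ_less [simp]: "i < n \<Longrightarrow> ring_succ n i < n"
  by (simp add: ring_succ_def)

lemma ring_pred_less [simp]: "i < n \<Longrightarrow> ring_pred n i < n"
  unfolding ring_pred_def by arith

lemma Suc_mod_eq_ring_succ: "i < n \<Longrightarrow> Suc i mod n = ring_succ n i"
  by (simp add: ring_succ_def)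

lemma ring_succ_pred: "i < n \<Longrightarrow> ring_succ n (ring_pred n i) = i"
  by (auto simp: ring_succ_def ring_pred_def)

lemma ring_offset_eq_0_iff: "i < n \<Longrightarrow> j < n \<Longrightarrow> ring_offset n i j = 0 \<longleftrightarrow> i = j"
  unfolding ring_offset_def by (rule iffI; simp split: if_splits; linarith)

context
  fixes n k :: nat
  assumes odd_order: "n = 2 * k + 1"
begin

lemma ring_offset_bounds: "i < n \<Longrightarrow> j < n \<Longrightarrow> - int k \<le> ring_offset n i j \<and> ring_offset n i j \<le> int k"
  using odd_order unfolding ring_offset_def by (simp split: if_split; linarith)

lemma ring_offset_commute: "i < n \<Longrightarrow> j < n \<Longrightarrow> ring_offset n j i = - ring_offset n i j"
  using odd_order unfolding ring_offset_def by (simp split: if_split; linarith)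

lemma ring_offset_succ_left:
  "i < n \<Longrightarrow> j < n \<Longrightarrow>
   ring_offset n (ring_succ n i) j = (if ring_offset n i j = - int k then int k else ring_offset n i j - 1)"
  using odd_order unfolding ring_offset_def ring_succ_def by (simp split: if_split; linarith)

lemma ring_offset_pred_left:
  "i < n \<Longrightarrow> j < n \<Longrightarrow>
   ring_offset n (ring_pred n i) j = (if ring_offset n i j = int k then - int k else ring_offset n i j + 1)"
  using odd_order unfolding ring_offset_def ring_pred_def by (simp split: if_split; linarith)

lemma ring_offset_succ_right:
  "i < n \<Longrightarrow> j < n \<Longrightarrow>
   ring_offset n i (ring_succ n j) = (if ring_offset n i j = int k then - int k else ring_offset n i j + 1)"
  using odd_order unfolding ring_offset_def ring_succ_def by (simp split: if_split; linarith)

end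

definition pair_gap :: "int \<Rightarrow> int" where
  "pair_gap s = (if 0 \<le> s then s else - s - 1)"

text \<open>
  The closed form of the distance, with \<open>s\<close> the offset from the first to the second index.
  Besides the three cycles, a route may zigzag along the path \<open>c\<^sub>i d\<^sub>i c\<^sub>i\<^sub>+\<^sub>1 d\<^sub>i\<^sub>+\<^sub>1 \<dots>\<close>,
  paying two edges per index; \<open>d\<^sub>j\<close> is entered from the nearer of \<open>c\<^sub>j\<close>, \<open>c\<^sub>j\<^sub>+\<^sub>1\<close>, whence
  \<open>pair_gap s\<close>, and \<open>pair_gap (- s)\<close> when \<open>d\<^sub>i\<close> is left.
\<close>

fun udist :: "nat \<Rightarrow> uvert \<Rightarrow> uvert \<Rightarrow> int" where
  "udist n (A i) (A j) = \<bar>ring_offset n i j\<bar>"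
| "udist n (A i) (B j) = \<bar>ring_offset n i j\<bar> + 1"
| "udist n (A i) (C j) = \<bar>ring_offset n i j\<bar> + 2"
| "udist n (A i) (D j) = pair_gap (ring_offset n i j) + 3"
| "udist n (A i) (E j) = pair_gap (ring_offset n i j) + 4"
| "udist n (B i) (A j) = \<bar>ring_offset n i j\<bar> + 1"
| "udist n (B i) (B j) = \<bar>ring_offset n i j\<bar>"
| "udist n (B i) (C j) = \<bar>ring_offset n i j\<bar> + 1"
| "udist n (B i) (D j) = pair_gap (ring_offset n i j) + 2"
| "udist n (B i) (E j) = pair_gap (ring_offset n i j) + 3"
| "udist n (C i) (A j) = \<bar>ring_offset n i j\<bar> + 2"
| "udist n (C i) (B j) = \<bar>ring_offset n i j\<bar> + 1"
| "udist n (C i) (C j) = min (2 * \<bar>ring_offset n i j\<bar>) (\<bar>ring_offset n i j\<bar> + 2)"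
| "udist n (C i) (D j) = min (2 * pair_gap (ring_offset n i j) + 1) (pair_gap (ring_offset n i j) + 3)"
| "udist n (C i) (E j) = pair_gap (ring_offset n i j) + 2"
| "udist n (D i) (A j) = pair_gap (- ring_offset n i j) + 3"
| "udist n (D i) (B j) = pair_gap (- ring_offset n i j) + 2"
| "udist n (D i) (C j) = min (2 * pair_gap (- ring_offset n i j) + 1) (pair_gap (- ring_offset n i j) + 3)"
| "udist n (D i) (D j) = min (2 * \<bar>ring_offset n i j\<bar>) (\<bar>ring_offset n i j\<bar> + 2)"
| "udist n (D i) (E j) = \<bar>ring_offset n i j\<bar> + 1"
| "udist n (E i) (A j) = pair_gap (- ring_offset n i j) + 4"
| "udist n (E i) (B j) = pair_gap (- ring_offset n i j) + 3"
| "udist n (E i) (C j) = pair_gap (- ring_offset n i j) + 2"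
| "udist n (E i) (D j) = \<bar>ring_offset n i j\<bar> + 1"
| "udist n (E i) (E j) = \<bar>ring_offset n i j\<bar>"

lemma udist_nonneg: "0 \<le> udist n x y"
  by (cases x; cases y) (auto simp: pair_gap_def)

lemma udist_self: "udist n x x = 0"
  by (cases x) (simp_all add: pair_gap_def)

fun U_nbrs :: "nat \<Rightarrow> uvert \<Rightarrow> uvert list" where
  "U_nbrs n (A i) = [A (ring_succ n i), A (ring_pred n i), B i]"
| "U_nbrs n (B i) = [B (ring_succ n i), B (ring_pred n i), A i, C i]"
| "U_nbrs n (C i) = [B i, D i, D (ring_pred n i)]"
| "U_nbrs n (D i) = [C i, C (ring_succ n i), E i]"
| "U_nbrs n (E i) = [E (ring_succ n i), E (ring_pred n i), D i]"

lemma U_verts_cases: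
  assumes "x \<in> U_verts n"
  obtains i where "i < n" "x \<in> {A i, B i, C i, D i, E i}"
  using assms by (auto simp: U_verts_def)

lemma U_verts_index [simp]:
  "A i \<in> U_verts n \<longleftrightarrow> i < n" "B i \<in> U_verts n \<longleftrightarrow> i < n" "C i \<in> U_verts n \<longleftrightarrow> i < n"
  "D i \<in> U_verts n \<longleftrightarrow> i < n" "E i \<in> U_verts n \<longleftrightarrow> i < n"
  by (auto simp: U_verts_def)

lemma U_edges_intros:
  assumes "i < n"
  shows "(A i, A (ring_succ n i)) \<in> U_edges n" "(B i, B (ring_succ n i)) \<in> U_edges n"
    "(E i, E (ring_succ n i)) \<in> U_edges n" "(A i, B i) \<in> U_edges n" "(B i, C i) \<in> U_edges n"
    "(C i, D i) \<in> U_edges n" "(D i, E i) \<in> U_edges n" "(C (ring_succ n i), D i) \<in> U_edges n"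
  using assms by (auto simp: U_edges_def Suc_mod_eq_ring_succ intro!: bexI[of _ i])

lemma U_adj_nbrs:
  assumes "x \<in> U_verts n" "y \<in> set (U_nbrs n x)"
  shows "U_adj n x y \<and> y \<in> U_verts n"
proof -
  obtain i where i: "i < n" "x \<in> {A i, B i, C i, D i, E i}"
    using assms(1) by (rule U_verts_cases)
  note edges = U_edges_intros[OF i(1)]
    U_edges_intros[OF ring_pred_less[OF i(1)], unfolded ring_succ_pred[OF i(1)]]
  from i(2) assms(2) show ?thesis
    by (elim insertE emptyE) (auto simp: U_adj_def edges ring_succ_pred i(1))
qed

context
  fixes n k :: nat
  assumes odd_order: "n = 2 * k + 1"
begin

lemma udist_edge:
  assumes "(x, y) \<in> U_edges n" "z \<in> U_verts n"
  shows "udist n x z \<le> udist n y z + 1 \<and> udist n y z \<le> udist n x z + 1"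
proof -
  from assms(1) obtain i where i: "i < n" and xy: "(x, y) \<in> {(A i, A (ring_succ n i)),
      (B i, B (ring_succ n i)), (E i, E (ring_succ n i)), (A i, B i), (B i, C i), (C i, D i),
      (D i, E i), (C (ring_succ n i), D i)}"
    by (auto simp: U_edges_def Suc_mod_eq_ring_succ)
  obtain j where j: "j < n" "z \<in> {A j, B j, C j, D j, E j}"
    using assms(2) by (rule U_verts_cases)
  from xy j(2) ring_offset_bounds[OF odd_order i j(1)] show ?thesis
    by (elim insertE emptyE; simp add: ring_offset_succ_left[OF odd_order i j(1)] pair_gap_def
        min_def abs_if split: if_splits; linarith)
qed

lemma udist_descent:
  assumes "x \<in> U_verts n" "z \<in> U_verts n" "x \<noteq> z"
  shows "\<exists>y\<in>set (U_nbrs n x). udist n y z + 1 = udist n x z"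
proof -
  obtain i where i: "i < n" "x \<in> {A i, B i, C i, D i, E i}"
    using assms(1) by (rule U_verts_cases)
  obtain j where j: "j < n" "z \<in> {A j, B j, C j, D j, E j}"
    using assms(2) by (rule U_verts_cases)
  have "i \<noteq> j \<longrightarrow> ring_offset n i j \<noteq> 0"
    using ring_offset_eq_0_iff[OF i(1) j(1)] by blast
  with i(2) j(2) assms(3) ring_offset_bounds[OF odd_order i(1) j(1)] show ?thesis
    by (elim insertE emptyE) (rule ccontr;
        simp add: ring_offset_succ_left[OF odd_order i(1) j(1)] ring_offset_pred_left[OF odd_order i(1) j(1)]
          pair_gap_def min_def abs_if split: if_splits; linarith)+
qed

lemma gdist_U:
  assumes "x \<in> U_verts n" "z \<in> U_verts n"
  shows "gdist (U_adj n) x z = nat (udist n x z)"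
proof (rule gdist_eqI[where V = "U_verts n"])
  fix x' y' z'
  assume "U_adj n x' y'" "z' \<in> U_verts n"
  then have "udist n x' z' \<le> udist n y' z' + 1"
    using udist_edge unfolding U_adj_def by blast
  then show "nat (udist n x' z') \<le> nat (udist n y' z') + 1"
    by linarith
next
  fix x' z'
  assume "x' \<in> U_verts n" "z' \<in> U_verts n" "x' \<noteq> z'"
  with udist_descent obtain y where "y \<in> set (U_nbrs n x')" "udist n y z' + 1 = udist n x' z'"
    by blast
  with U_adj_nbrs[OF \<open>x' \<in> U_verts n\<close>] udist_nonneg[of n y z']
  show "\<exists>y. U_adj n x' y \<and> y \<in> U_verts n \<and> nat (udist n y z') + 1 = nat (udist n x' z')"
    by (metis nat_add_distrib nat_one_as_int zero_le_one)
qed (use assms udist_self in auto)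

lemma strongly_resolves_U_iff:
  assumes "u \<in> U_verts n" "v \<in> U_verts n" "w \<in> U_verts n"
  shows "strongly_resolves (U_adj n) w u v \<longleftrightarrow>
    udist n v w = udist n v u + udist n u w \<or> udist n u w = udist n u v + udist n v w"
  using assms udist_nonneg[of n]
  by (simp add: strongly_resolves_def gdist_U nat_add_distrib[symmetric] eq_nat_nat_iff)

lemma A_resolves_B:
  assumes "i < n" "j < n" "v \<in> {B j, D j, E j}" "v \<noteq> B i"
  shows "strongly_resolves (U_adj n) (A i) (B i) v"
proof -
  have "i \<noteq> j \<longrightarrow> ring_offset n i j \<noteq> 0"
    using ring_offset_eq_0_iff[OF assms(1,2)] by blast
  with assms(3,4) ring_offset_bounds[OF odd_order assms(1,2)]
  have "udist n v (A i) = udist n v (B i) + udist n (B i) (A i)"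
    by (elim insertE emptyE; simp add: ring_offset_commute[OF odd_order assms(1,2)] pair_gap_def
        min_def abs_if split: if_splits; linarith)
  with assms show ?thesis
    by (subst strongly_resolves_U_iff) auto
qed

lemma C_resolves_DE:
  assumes "i < n" "j < n" "u \<in> {D i, E i}" "v \<in> {D j, E j}" "u \<noteq> v"
    and "\<not> (u = E i \<and> v = D j)"
    and "c = (if 0 \<le> ring_offset n i j then i else ring_succ n i)"
  shows "strongly_resolves (U_adj n) (C c) u v"
proof -
  have "i \<noteq> j \<longrightarrow> ring_offset n i j \<noteq> 0"
    using ring_offset_eq_0_iff[OF assms(1,2)] by blast
  with assms(3-6) ring_offset_bounds[OF odd_order assms(1,2)]
  have "udist n v (C c) = udist n v u + udist n u (C c)"
    unfolding assms(7)
    by (elim insertE emptyE; simp add: ring_offset_commute[OF odd_order assms(1,2)]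
        ring_offset_succ_right[OF odd_order assms(2,1)] ring_offset_succ_right[OF odd_order assms(1,1)]
        pair_gap_def min_def abs_if split: if_splits; linarith)
  with assms show ?thesis
    by (subst strongly_resolves_U_iff) auto
qed

lemma landmark_resolves:
  assumes "i < n" "j < n" "u \<noteq> v"
    and "u \<in> {A i, C i} \<or> u = B i \<and> v \<in> {B j, D j, E j}
      \<or> u \<in> {D i, E i} \<and> v \<in> {D j, E j} \<and> \<not> (u = E i \<and> v = D j)"
  shows "\<exists>w\<in>(\<Union>l\<in>{0..<n}. {A l, C l}). strongly_resolves (U_adj n) w u v"
  using assms(4)
proof (elim disjE conjE)
  assume "u \<in> {A i, C i}"
  with \<open>i < n\<close> show ?thesis
    by (intro bexI[of _ u] strongly_resolves_self) auto
next
  assume "u = B i" "v \<in> {B j, D j, E j}"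
  then have "strongly_resolves (U_adj n) (A i) u v"
    using A_resolves_B[OF assms(1,2)] \<open>u \<noteq> v\<close> by simp
  with \<open>i < n\<close> show ?thesis
    by (intro bexI[of _ "A i"]) auto
next
  assume "u \<in> {D i, E i}" "v \<in> {D j, E j}" "\<not> (u = E i \<and> v = D j)"
  then have "strongly_resolves (U_adj n) (C (if 0 \<le> ring_offset n i j then i else ring_succ n i)) u v"
    using C_resolves_DE[OF assms(1,2) _ _ \<open>u \<noteq> v\<close> _ refl] by simp
  with \<open>i < n\<close> show ?thesis
    by (intro bexI[of _ "C (if 0 \<le> ring_offset n i j then i else ring_succ n i)"]) auto
qed

end

theorem lemma4p6:
  fixes n k :: nat
  assumes "n = 2 * k + 1" and "k \<ge> 1"
  shows "strong_resolving_set (U_verts n) (U_adj n) (\<Union>i\<in>{0..<n}. {A i, C i})"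
  unfolding strong_resolving_set_def
proof (intro conjI ballI impI)
  show "(\<Union>i\<in>{0..<n}. {A i, C i}) \<subseteq> U_verts n"
    by (auto simp: U_verts_def)
  fix u v
  assume "u \<in> U_verts n" "v \<in> U_verts n" "u \<noteq> v"
  obtain i where i: "i < n" "u \<in> {A i, B i, C i, D i, E i}"
    using \<open>u \<in> U_verts n\<close> by (rule U_verts_cases)
  obtain j where j: "j < n" "v \<in> {A j, B j, C j, D j, E j}"
    using \<open>v \<in> U_verts n\<close> by (rule U_verts_cases)
  from i(2) j(2) consider
      "u \<in> {A i, C i} \<or> u = B i \<and> v \<in> {B j, D j, E j}
        \<or> u \<in> {D i, E i} \<and> v \<in> {D j, E j} \<and> \<not> (u = E i \<and> v = D j)"
    | "v \<in> {A j, C j} \<or> v = B j \<and> u \<in> {B i, D i, E i}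
        \<or> v \<in> {D j, E j} \<and> u \<in> {D i, E i} \<and> \<not> (v = E j \<and> u = D i)"
    by (elim insertE emptyE) auto
  then show "\<exists>w\<in>(\<Union>i\<in>{0..<n}. {A i, C i}). strongly_resolves (U_adj n) w u v"
  proof cases
    case 1
    then show ?thesis
      using landmark_resolves[OF assms(1) i(1) j(1) \<open>u \<noteq> v\<close>] by blast
  next
    case 2
    then show ?thesis
      unfolding strongly_resolves_commute[of _ _ u]
      using landmark_resolves[OF assms(1) j(1) i(1) \<open>u \<noteq> v\<close>[symmetric]] by blast
  qed
qed

end
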